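(* If $u$ is a standard Lyndon–Shirshov word in $x_1,\dots,x_n$ that does not contain $x_n$, then either $u=x_kx_{k+1}\cdots x_m$ for some $1\le k\le m<n$, or $[u]=0$ in $U_q^+(\mathfrak{sp}_{2n})$, where $[u]$ denotes $u$ with the standard arrangement of (skew) brackets.
   Context: Let $\mathbf{k}$ be a field, $G$ an abelian group, $n\ge 2$, $X=\{x_1,\dots,x_n\}$, $g_i\in G$, characters $\chi^i:G\to\mathbf{k}^*$, $p_{ij}=\chi^i(g_j)$; for words $u,v$, $p(u,v)=\chi^u(g_v)$ where $g_u,\chi^u$ replace $x_i$ by $g_i$, resp. $\chi^i$. $G\langle X\rangle$: skew group algebra with $x_ig=\chi^i(g)gx_i$; skew bracket $[u,v]=uv-p(u,v)vu$. Fix $q\in\mathbf{k}^*$, $q^3\ne1$, $q\ne-1$; assume $p_{ii}=q$ ($i<n$), $p_{nn}=q^2$, $p_{i,i-1}p_{i-1,i}=q^{-1}$ ($1<i<n$), $p_{n-1,n}p_{n,n-1}=q^{-2}$, $p_{ij}p_{ji}=1$ ($j>i+1$). $U_q^+(\mathfrak{sp}_{2n})$ is the quotient of $G\langle X\rangle$ by the ideal generated by $[x_i,[x_i,x_{i+1}]]$, $[[x_i,x_{i+1}],x_{i+1}]$ ($1\le i<n-1$), $[x_i,x_j]$ ($j>i+1$), $[[x_{n-1},x_n],x_n]$, $[x_{n-1},[x_{n-1},[x_{n-1},x_n]]]$. Order $x_1>x_2>\dots>x_n$, and order words lexicographically from left to right, a proper beginning of a word being greater than the word. A nonempty word $u$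 is standard (Lyndon–Shirshov) if $vw>wv$ for every decomposition $u=vw$ with $v,w$ nonempty. The standard bracketing is defined inductively: $[x_i]=x_i$, and for a standard word $u$ of length $\ge2$, $[u]=[[v],[w]]$ where $u=vw$ with $v,w$ standard and $v$ of minimal possible length. *)

theory Defs
  imports Main "HOL-Library.Poly_Mapping"
begin

(* Letters x_1,...,x_n are encoded as natural numbers 1..n; words are nat lists.
   The abelian group G is a type 'g :: ab_group_add (written additively),
   the field k is a type 'k :: field.
   chi i : G -> k is the character chi^i, g i \<in> G is g_i. *)

definition chi_word :: "(nat \<Rightarrow> 'g \<Rightarrow> 'k::field) \<Rightarrow> nat list \<Rightarrow> 'g \<Rightarrow> 'k" where
  "chi_word chi u h = prod_list (map (\<lambda>i. chi i h) u)"

definition g_word :: "(nat \<Rightarrow> 'g::ab_group_add) \<Rightarrow> nat list \<Rightarrow> 'g" where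
  "g_word g v = sum_list (map g v)"

definition pw :: "(nat \<Rightarrow> 'g::ab_group_add \<Rightarrow> 'k::field) \<Rightarrow> (nat \<Rightarrow> 'g) \<Rightarrow> nat list \<Rightarrow> nat list \<Rightarrow> 'k" where
  "pw chi g u v = chi_word chi u (g_word g v)"

(* Elements of the skew group algebra G<X>: finite k-linear combinations of
   basis elements g*w (g \<in> G, w a word), encoded as (g, w). *)
type_synonym ('g, 'k) sga = "('g \<times> nat list) \<Rightarrow>\<^sub>0 'k"

(* multiplication: (g u)(h v) = chi^u(h) (g h)(u v), i.e. x_i h = chi^i(h) h x_i *)
definition sga_mul :: "(nat \<Rightarrow> 'g::ab_group_add \<Rightarrow> 'k::field) \<Rightarrow> ('g, 'k) sga \<Rightarrow> ('g, 'k) sga \<Rightarrow> ('g, 'k) sga" where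
  "sga_mul chi a b =
     (\<Sum>x\<in>Poly_Mapping.keys a. \<Sum>y\<in>Poly_Mapping.keys b.
        Poly_Mapping.single (fst x + fst y, snd x @ snd y)
          (Poly_Mapping.lookup a x * Poly_Mapping.lookup b y * chi_word chi (snd x) (fst y)))"

definition sga_const :: "'k::field \<Rightarrow> ('g::ab_group_add, 'k) sga" where
  "sga_const c = Poly_Mapping.single (0, []) c"

definition sga_X :: "nat \<Rightarrow> ('g::ab_group_add, 'k::field) sga" where
  "sga_X i = Poly_Mapping.single (0, [i]) 1"

(* skew bracket [a,b] = ab - p(u,v) ba for a homogeneous of degree (word) u, b of degree v *)
definition sbr :: "(nat \<Rightarrow> 'g::ab_group_add \<Rightarrow> 'k::field) \<Rightarrow> (nat \<Rightarrow> 'g) \<Rightarrow>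
     nat list \<Rightarrow> ('g, 'k) sga \<Rightarrow> nat list \<Rightarrow> ('g, 'k) sga \<Rightarrow> ('g, 'k) sga" where
  "sbr chi g u a v b = sga_mul chi a b - sga_mul chi (sga_mul chi (sga_const (pw chi g u v)) b) a"

inductive_set sga_ideal :: "(nat \<Rightarrow> 'g::ab_group_add \<Rightarrow> 'k::field) \<Rightarrow> ('g, 'k) sga set \<Rightarrow> ('g, 'k) sga set"
  for chi R where
  gen: "r \<in> R \<Longrightarrow> r \<in> sga_ideal chi R"
| zero: "0 \<in> sga_ideal chi R"
| add: "a \<in> sga_ideal chi R \<Longrightarrow> b \<in> sga_ideal chi R \<Longrightarrow> a + b \<in> sga_ideal chi R"
| lmul: "a \<in> sga_ideal chi R \<Longrightarrow> sga_mul chi c a \<in> sga_ideal chi R"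
| rmul: "a \<in> sga_ideal chi R \<Longrightarrow> sga_mul chi a c \<in> sga_ideal chi R"

definition sp_rels :: "nat \<Rightarrow> (nat \<Rightarrow> 'g::ab_group_add \<Rightarrow> 'k::field) \<Rightarrow> (nat \<Rightarrow> 'g) \<Rightarrow> ('g, 'k) sga set" where
  "sp_rels n chi g =
     {sbr chi g [i] (sga_X i) [i, i+1] (sbr chi g [i] (sga_X i) [i+1] (sga_X (i+1))) | i. 1 \<le> i \<and> i < n - 1}
   \<union> {sbr chi g [i, i+1] (sbr chi g [i] (sga_X i) [i+1] (sga_X (i+1))) [i+1] (sga_X (i+1)) | i. 1 \<le> i \<and> i < n - 1}
   \<union> {sbr chi g [i] (sga_X i) [j] (sga_X j) | i j. 1 \<le> i \<and> i + 1 < j \<and> j \<le> n}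
   \<union> {sbr chi g [n-1, n] (sbr chi g [n-1] (sga_X (n-1)) [n] (sga_X n)) [n] (sga_X n)}
   \<union> {sbr chi g [n-1] (sga_X (n-1)) [n-1, n-1, n]
        (sbr chi g [n-1] (sga_X (n-1)) [n-1, n]
          (sbr chi g [n-1] (sga_X (n-1)) [n] (sga_X n)))}"

definition zero_in_U :: "nat \<Rightarrow> (nat \<Rightarrow> 'g::ab_group_add \<Rightarrow> 'k::field) \<Rightarrow> (nat \<Rightarrow> 'g) \<Rightarrow> ('g, 'k) sga \<Rightarrow> bool" where
  "zero_in_U n chi g a \<longleftrightarrow> a \<in> sga_ideal chi (sp_rels n chi g)"

(* Word order: x_1 > x_2 > ... > x_n, i.e. letter i is greater than letter j iff i < j;
   lexicographic from the left; a proper beginning of a word is greater than the word. *)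
definition word_gt :: "nat list \<Rightarrow> nat list \<Rightarrow> bool" where
  "word_gt u v \<longleftrightarrow>
     (\<exists>w. w \<noteq> [] \<and> v = u @ w) \<or>
     (\<exists>p a b s t. u = p @ a # s \<and> v = p @ b # t \<and> a < b)"

definition standard :: "nat list \<Rightarrow> bool" where
  "standard u \<longleftrightarrow> u \<noteq> [] \<and>
     (\<forall>v w. v \<noteq> [] \<longrightarrow> w \<noteq> [] \<longrightarrow> u = v @ w \<longrightarrow> word_gt (v @ w) (w @ v))"

definition std_split :: "nat list \<Rightarrow> nat" where
  "std_split u = (LEAST k. 0 < k \<and> k < length u \<and> standard (take k u) \<and> standard (drop k u))"

function std_bracket :: "(nat \<Rightarrow> 'g::ab_group_add \<Rightarrow> 'k::field) \<Rightarrow> (nat \<Rightarrow> 'g) \<Rightarrow> nat list \<Rightarrow> ('g, 'k) sga" where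
  "std_bracket chi g u =
     (if length u = 1 then sga_X (hd u)
      else (let k = std_split u in
            if 0 < k \<and> k < length u then
              sbr chi g (take k u) (std_bracket chi g (take k u))
                        (drop k u) (std_bracket chi g (drop k u))
            else 0))"
  by pat_completeness auto
termination by (relation "measure (\<lambda>(_, _, u). length u)") auto

end

(*
  Induction on the length of the standard word u along its Shirshov factorization u = v w,
  v of least length.  If [v] or [w] vanishes, so does [u] = [[v], [w]].  Otherwise both are
  interval words, v = x_k ... x_m and w = x_s ... x_t, whose standard brackets are the
  right-normed ones.  Standardness of u and minimality of v leave, besides s = m + 1 (where u
  is itself an interval), three configurations: s > m + 1, where the brackets skew-commute
  because distant generators do; k < s <= t <= m, where [x_k ... x_m] skew-commutes with every
  letter of w; and s = k, m < t.  The last two rest on the Serre relations for three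
  consecutive blocks a = [x_k ... x_i], b = x_(i+1), c = [x_(i+2) ... x_t], which satisfy the
  relations of the generators of U_q^+(sl_4); Jacobi-identity computations then give
  [[a, [b, c]], b] = 0 and [[a, b], [a, [b, c]]] = 0, dividing by 1 + q along the way.
*)

theory Submission
  imports Defs "HOL-Library.List_Lexorder"
begin

declare upt_Suc [simp del] std_bracket.simps [simp del]

abbreviation ivl :: "nat \<Rightarrow> nat \<Rightarrow> nat list" where
  "ivl k m \<equiv> [k..<Suc m]"

section \<open>Standard words\<close>

text \<open>The paper's order, with \<open>x\<^sub>1 > x\<^sub>2 > \<dots>\<close> and a proper beginning greater than
  the word, is exactly the reverse of the lexicographic order of \<open>List_Lexorder\<close>; so
  "greater" below always reads as \<open><\<close>.\<close>

lemma word_gt_iff_less: "word_gt u v \<longleftrightarrow> u < (v :: nat list)"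
proof -
  have "(\<exists>w. w \<noteq> [] \<and> v = u @ w) \<longleftrightarrow> (\<exists>a w. v = u @ a # w)"
    by (metis list.exhaust list.distinct(1))
  then show ?thesis
    unfolding word_gt_def list_less_def lexord_def by (auto; blast)
qed

lemma standard_iff_less_rotations:
  "standard u \<longleftrightarrow> u \<noteq> [] \<and>
     (\<forall>v w. v \<noteq> [] \<longrightarrow> w \<noteq> [] \<longrightarrow> u = v @ w \<longrightarrow> v @ w < w @ (v :: nat list))"
  unfolding standard_def word_gt_iff_less by blast

lemma append_less_append_if_not_prefix:
  assumes "x < (y :: nat list)" "\<nexists>z. y = x @ z"
  shows "x @ a < y @ b"
proof -
  obtain p c d s t where "x = p @ c # s" "y = p @ d # t" "c < d"
    using assms unfolding list_less_def lexord_def by auto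
  then show ?thesis by (simp add: list_less_def lexord_append_left_rightI)
qed

lemma append_less_append_same_left: "(x :: nat list) @ a < x @ b \<longleftrightarrow> a < b"
  by (simp add: list_less_def irrefl_def)

lemma less_of_append_less_append_eq_length:
  assumes "(v :: nat list) @ w < z @ w" "length v = length z" "v \<noteq> z"
  shows "v < z"
  using assms lexord_sufE unfolding list_less_def by blast

lemma standard_less_proper_suffix:
  assumes "standard u" "u = v @ w" "v \<noteq> []" "w \<noteq> []"
  shows "u < w"
proof (rule ccontr)
  have rot: "\<And>a b. a \<noteq> [] \<Longrightarrow> b \<noteq> [] \<Longrightarrow> u = a @ b \<Longrightarrow> a @ b < b @ a"
    using assms(1) standard_iff_less_rotations by blast
  assume "\<not> u < w"
  moreover have "u \<noteq> w" using assms by auto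
  ultimately have "w < u" by auto
  show False
  proof (cases "\<exists>z. u = w @ z")
    case True
    then obtain z where z: "u = w @ z" by blast
    have "length z = length v" using z assms(2) by (metis add_left_cancel length_append add.commute)
    hence "z \<noteq> []" using assms(3) by auto
    have "w @ z < w @ v" using rot[OF assms(3,4,2)] z assms(2) by simp
    hence "z < v" by (simp add: append_less_append_same_left)
    have "v @ w < z @ w" using rot[OF assms(4) \<open>z \<noteq> []\<close> z] z assms(2) by simp
    hence "v < z"
      using \<open>z < v\<close> \<open>length z = length v\<close> less_of_append_less_append_eq_length by fastforce
    with \<open>z < v\<close> show False by auto
  next
    case False
    have "w @ v < u @ []" using append_less_append_if_not_prefix[OF \<open>w < u\<close> False] .
    with rot[OF assms(3,4,2)] assms(2) show False by auto
  qed
qed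

lemma standard_if_less_proper_suffixes:
  assumes "u \<noteq> []" "\<And>v w. v \<noteq> [] \<Longrightarrow> w \<noteq> [] \<Longrightarrow> u = v @ w \<Longrightarrow> u < (w :: nat list)"
  shows "standard u"
  unfolding standard_iff_less_rotations
proof (intro conjI allI impI)
  fix v w :: "nat list"
  assume vw: "v \<noteq> []" "w \<noteq> []" "u = v @ w"
  have "\<nexists>z. w = u @ z"
    using vw by (auto dest: arg_cong[where f = length])
  with assms(2)[OF vw] have "u @ [] < w @ v"
    by (rule append_less_append_if_not_prefix)
  then show "v @ w < w @ v" using vw by simp
qed (use assms in simp)

text \<open>Shirshov's factorization: split off the least proper suffix.\<close>

lemma standard_least_proper_suffix:
  assumes "0 < i" "i < length u" and least: "\<And>j. 0 < j \<Longrightarrow> j < length u \<Longrightarrow> drop i u \<le> drop j u"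
  shows "standard (drop i u)"
proof (rule standard_if_less_proper_suffixes)
  fix a b :: "nat list"
  assume ab: "a \<noteq> []" "b \<noteq> []" "drop i u = a @ b"
  have "b = drop (length a) (drop i u)" using ab(3)[symmetric] by (simp add: append_eq_conv_conj)
  then have "b = drop (i + length a) u" by (simp add: add.commute)
  moreover have "length u - i = length a + length b" using ab(3) by (metis length_append length_drop)
  with ab(2) assms(2) have "i + length a < length u" by (cases b) auto
  ultimately have "drop i u \<le> b" using least[of "i + length a"] assms(1) by simp
  moreover have "drop i u \<noteq> b" using ab by auto
  ultimately show "drop i u < b" by simp
qed (use assms in simp)

lemma standard_take_least_proper_suffix:
  assumes "standard u" "0 < i" "i < length u"
    and least: "\<And>j. 0 < j \<Longrightarrow> j < length u \<Longrightarrow> drop i u \<le> drop j u"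
  shows "standard (take i u)"
proof (rule standard_if_less_proper_suffixes)
  let ?v = "take i u" and ?w = "drop i u"
  fix a s :: "nat list"
  assume as: "a \<noteq> []" "s \<noteq> []" "?v = a @ s"
  have u: "u = ?v @ ?w" by simp
  have "u = a @ (s @ ?w)" using as(3) by (metis append_assoc append_take_drop_id)
  with as have "u < s @ ?w" by (intro standard_less_proper_suffix[OF assms(1)]) auto
  show "?v < s"
  proof (cases "\<exists>t. ?v = s @ t")
    case True
    then obtain t where t: "?v = s @ t" by blast
    with as have "t \<noteq> []" by auto
    have "u = s @ (t @ ?w)" using t by (metis append_assoc append_take_drop_id)
    then have "t @ ?w = drop (length s) u" by (metis append_eq_conv_conj)
    moreover have "length s < length u"
      using \<open>u = s @ (t @ ?w)\<close> \<open>t \<noteq> []\<close> by (metis length_append length_greater_0_conv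
          less_add_same_cancel1 Nil_is_append_conv)
    ultimately have "?w \<le> t @ ?w" using least[of "length s"] as by simp
    moreover have "t @ ?w < ?w"
      using \<open>u < s @ ?w\<close> t by (subst (asm) u) (simp add: append_less_append_same_left)
    ultimately show ?thesis by auto
  next
    case False
    have "\<not> s < ?v"
    proof
      assume "s < ?v"
      then have "s @ ?w < ?v @ ?w" using False append_less_append_if_not_prefix by blast
      with \<open>u < s @ ?w\<close> show False by auto
    qed
    moreover have "?v \<noteq> s" using as by auto
    ultimately show ?thesis by auto
  qed
qed (use assms in auto)

lemma standard_factorization_exists:
  assumes "standard u" "2 \<le> length u"
  shows "\<exists>k. 0 < k \<and> k < length u \<and> standard (take k u) \<and> standard (drop k u)"
proof -
  define S where "S = (\<lambda>i. drop i u) ` {i. 0 < i \<and> i < length u}"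
  have "finite S" "S \<noteq> {}" unfolding S_def using assms(2) by auto
  then have "Min S \<in> S" by simp
  then obtain i where i: "0 < i" "i < length u" "Min S = drop i u" unfolding S_def by auto
  have "drop i u \<le> drop j u" if "0 < j" "j < length u" for j
    unfolding i(3)[symmetric] using \<open>finite S\<close> that by (auto simp: S_def)
  with i assms(1) show ?thesis
    by (blast intro: standard_least_proper_suffix standard_take_least_proper_suffix)
qed

lemma
  assumes "standard u" "2 \<le> length u"
  shows std_split_bounds: "0 < std_split u" "std_split u < length u"
    and std_split_standard: "standard (take (std_split u) u)" "standard (drop (std_split u) u)"
  using LeastI_ex[OF standard_factorization_exists[OF assms]] unfolding std_split_def by auto

lemma std_split_minimal:
  "0 < k \<Longrightarrow> k < length u \<Longrightarrow> standard (take k u) \<Longrightarrow> standard (drop k u) \<Longrightarrow> std_split u \<le> k"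
  unfolding std_split_def by (rule Least_le) simp

lemma upt_append: "i \<le> j \<Longrightarrow> j \<le> k \<Longrightarrow> [i..<k] = [i..<j] @ [j..<k]"
  using upt_add_eq_append[of i j "k - j"] by simp

lemma standard_ivl: "k \<le> m \<Longrightarrow> standard (ivl k m)"
proof (rule standard_if_less_proper_suffixes)
  fix a b :: "nat list"
  assume "k \<le> m" "a \<noteq> []" "b \<noteq> []" "ivl k m = a @ b"
  then have b: "b = [k + length a..<Suc m]" by (metis append_eq_conv_conj drop_upt)
  with \<open>b \<noteq> []\<close> have "k + length a < Suc m" by auto
  with b \<open>k \<le> m\<close> \<open>a \<noteq> []\<close> show "ivl k m < b" by (simp add: upt_conv_Cons)
qed simp

lemma not_standard_ivl_append_ivl:
  assumes "k \<le> m" "s \<le> t" "s < k \<or> s = k \<and> t \<le> m"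
  shows "\<not> standard (ivl k m @ ivl s t)"
proof
  assume "standard (ivl k m @ ivl s t)"
  then have less: "ivl k m @ ivl s t < ivl s t @ ivl k m"
    using assms unfolding standard_iff_less_rotations by simp
  show False
  proof (cases "s < k")
    case True
    then show False using less assms by (simp add: upt_conv_Cons)
  next
    case False
    with assms have "s = k" "t \<le> m" by auto
    show False
    proof (cases "t = m")
      case False
      have "ivl k m = ivl k t @ [Suc t..<Suc m]"
        using \<open>t \<le> m\<close> \<open>s \<le> t\<close> \<open>s = k\<close> by (intro upt_append) auto
      moreover have "[Suc t..<Suc m] = Suc t # [Suc (Suc t)..<Suc m]"
        using \<open>t \<le> m\<close> False by (intro upt_conv_Cons) simp
      ultimately have e1: "ivl k m @ ivl k t = ivl k t @ (Suc t # [Suc (Suc t)..<Suc m] @ ivl k t)"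
        by simp
      have e2: "ivl k t @ ivl k m = ivl k t @ (k # [Suc k..<Suc m])"
        using assms by (simp add: upt_conv_Cons)
      have "ivl k t @ ivl k m < ivl k m @ ivl k t"
        unfolding e1 e2 append_less_append_same_left using \<open>s \<le> t\<close> \<open>s = k\<close> by simp
      with less \<open>s = k\<close> show False by auto
    qed (use less \<open>s = k\<close> in simp)
  qed
qed

lemma standard_ivl_append_ivl:
  assumes "s \<le> m" "m < t"
  shows "standard (ivl s m @ ivl s t)"
proof (rule standard_if_less_proper_suffixes)
  fix a b :: "nat list"
  assume ab: "a \<noteq> []" "b \<noteq> []" "ivl s m @ ivl s t = a @ b"
  then have b: "b = drop (length a) (ivl s m @ ivl s t)" by simp
  have u: "ivl s m @ ivl s t = s # ([Suc s..<Suc m] @ ivl s t)"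
    using assms by (simp add: upt_conv_Cons)
  consider "length a < Suc m - s" | "length a = Suc m - s" | "length a > Suc m - s" by linarith
  then show "ivl s m @ ivl s t < b"
  proof cases
    case 1
    then have "b = [s + length a..<Suc m] @ ivl s t" using b by simp
    also have "\<dots> = (s + length a) # ([Suc (s + length a)..<Suc m] @ ivl s t)"
      using 1 by (simp add: upt_conv_Cons)
    finally have "b = \<dots>" .
    with u ab(1) show ?thesis by simp
  next
    case 2
    then have "b = ivl s t" using b by simp
    also have "\<dots> = ivl s m @ [Suc m..<Suc t]" using assms by (intro upt_append) auto
    also have "[Suc m..<Suc t] = Suc m # [Suc (Suc m)..<Suc t]" using assms by (intro upt_conv_Cons) simp
    finally have b': "b = ivl s m @ (Suc m # [Suc (Suc m)..<Suc t])" .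
    have "ivl s m @ ivl s t = ivl s m @ (s # [Suc s..<Suc t])"
      using assms by (simp add: upt_conv_Cons)
    then show ?thesis unfolding b' append_less_append_same_left using assms by simp
  next
    case 3
    define d where "d = length a - (Suc m - s)"
    have "0 < d" using 3 unfolding d_def by simp
    have "b = [s + d..<Suc t]" using b 3 unfolding d_def by simp
    with ab(2) have "b = (s + d) # [Suc (s + d)..<Suc t]" by (simp add: upt_conv_Cons)
    with u \<open>0 < d\<close> show ?thesis by simp
  qed
qed (use assms in simp)

lemma std_split_ivl: "k < m \<Longrightarrow> std_split (ivl k m) = 1"
  unfolding std_split_def
proof (rule Least_equality)
  assume "k < m"
  then show "0 < (1::nat) \<and> 1 < length (ivl k m) \<and> standard (take 1 (ivl k m)) \<and> standard (drop 1 (ivl k m))"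
    using standard_ivl[of k k] standard_ivl[of "Suc k" m] by (simp add: upt_conv_Cons upt_Suc)
qed auto

text \<open>The shape of the left factor is what excludes \<open>k < s \<le> m < t\<close>: there
  \<open>ivl k (s - 1)\<close> would be a shorter standard left factor.\<close>

lemma std_split_ivl_append_ivl_cases:
  assumes "standard (ivl k m @ ivl s t)" "k \<le> m" "s \<le> t"
    and "std_split (ivl k m @ ivl s t) = length (ivl k m)"
  shows "s = k \<and> m < t \<or> k < s \<and> t \<le> m \<or> m < s"
proof (rule ccontr)
  assume "\<not> ?thesis"
  with assms(1-3) not_standard_ivl_append_ivl have "k < s" "s \<le> m" "m < t"
    by (metis le_neq_implies_less not_le)+
  let ?j = "s - k" and ?u = "ivl k m @ ivl s t"
  have "take ?j ?u = ivl k (s - 1)" "drop ?j ?u = ivl s m @ ivl s t"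
    using \<open>k < s\<close> \<open>s \<le> m\<close> by (simp_all add: min_def)
  moreover have "standard (ivl k (s - 1))" using \<open>k < s\<close> by (intro standard_ivl) simp
  moreover have "standard (ivl s m @ ivl s t)" using \<open>s \<le> m\<close> \<open>m < t\<close> by (rule standard_ivl_append_ivl)
  ultimately have "std_split ?u \<le> ?j"
    using \<open>k < s\<close> \<open>s \<le> m\<close> by (intro std_split_minimal) auto
  with assms(4) \<open>k < s\<close> \<open>s \<le> m\<close> show False by simp
qed

section \<open>The skew group algebra\<close>

lemma std_bracket_single [simp]: "std_bracket chi g [i] = sga_X i"
  by (simp add: std_bracket.simps)

lemma std_bracket_std_split:
  assumes "0 < std_split u" "std_split u < length u"
  shows "std_bracket chi g u = sbr chi g (take (std_split u) u) (std_bracket chi g (take (std_split u) u))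
      (drop (std_split u) u) (std_bracket chi g (drop (std_split u) u))"
  using assms by (subst std_bracket.simps) (simp add: Let_def)

lemma std_bracket_std_factors:
  assumes "standard u" "2 \<le> length u"
  obtains v w where "u = v @ w" "v \<noteq> []" "w \<noteq> []" "standard v" "standard w" "std_split u = length v"
    "std_bracket chi g u = sbr chi g v (std_bracket chi g v) w (std_bracket chi g w)"
proof -
  note split = std_split_bounds[OF assms] std_split_standard[OF assms]
  show ?thesis
  proof (rule that[of "take (std_split u) u" "drop (std_split u) u"])
    show "std_bracket chi g u = sbr chi g (take (std_split u) u) (std_bracket chi g (take (std_split u) u))
        (drop (std_split u) u) (std_bracket chi g (drop (std_split u) u))"
      using split by (intro std_bracket_std_split)
  qed (use split in auto)
qed

locale skew_group_algebra =
  fixes chi :: "nat \<Rightarrow> 'g::ab_group_add \<Rightarrow> 'k::field" and g :: "nat \<Rightarrow> 'g"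
  assumes chi_hom: "\<And>i a b. chi i (a + b) = chi i a * chi i b"
    and chi_nonzero: "\<And>i a. chi i a \<noteq> 0"
begin

lemma chi_zero: "chi i 0 = 1"
  using chi_hom[of i 0 0] chi_nonzero[of i 0] by (metis add_0 mult_cancel_left1)

lemma chi_word_add: "chi_word chi u (a + b) = chi_word chi u a * chi_word chi u b"
  unfolding chi_word_def by (induction u) (auto simp: chi_hom mult_ac)

lemma chi_word_append: "chi_word chi (u @ v) h = chi_word chi u h * chi_word chi v h"
  unfolding chi_word_def by simp

lemma chi_word_zero [simp]: "chi_word chi u 0 = 1"
  unfolding chi_word_def by (induction u) (auto simp: chi_zero)

lemma chi_word_Nil [simp]: "chi_word chi [] h = 1"
  unfolding chi_word_def by simp

lemma chi_word_nonzero: "chi_word chi u h \<noteq> 0"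
  unfolding chi_word_def by (induction u) (auto simp: chi_nonzero)

abbreviation mul (infixl "\<odot>" 70) where "a \<odot> b \<equiv> sga_mul chi a b"

lemma mul_eq_sum:
  assumes "finite S" "Poly_Mapping.keys a \<subseteq> S" "finite T" "Poly_Mapping.keys b \<subseteq> T"
  shows "a \<odot> b = (\<Sum>x\<in>S. \<Sum>y\<in>T. Poly_Mapping.single (fst x + fst y, snd x @ snd y)
          (Poly_Mapping.lookup a x * Poly_Mapping.lookup b y * chi_word chi (snd x) (fst y)))"
proof -
  have "(\<Sum>y\<in>Poly_Mapping.keys b. Poly_Mapping.single (fst x + fst y, snd x @ snd y)
          (Poly_Mapping.lookup a x * Poly_Mapping.lookup b y * chi_word chi (snd x) (fst y)))
       = (\<Sum>y\<in>T. Poly_Mapping.single (fst x + fst y, snd x @ snd y)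
          (Poly_Mapping.lookup a x * Poly_Mapping.lookup b y * chi_word chi (snd x) (fst y)))" for x
    by (rule sum.mono_neutral_left) (use assms in \<open>auto simp: in_keys_iff\<close>)
  then have "a \<odot> b = (\<Sum>x\<in>Poly_Mapping.keys a. \<Sum>y\<in>T. Poly_Mapping.single (fst x + fst y, snd x @ snd y)
          (Poly_Mapping.lookup a x * Poly_Mapping.lookup b y * chi_word chi (snd x) (fst y)))"
    unfolding sga_mul_def by simp
  also have "\<dots> = (\<Sum>x\<in>S. \<Sum>y\<in>T. Poly_Mapping.single (fst x + fst y, snd x @ snd y)
          (Poly_Mapping.lookup a x * Poly_Mapping.lookup b y * chi_word chi (snd x) (fst y)))"
    by (rule sum.mono_neutral_left) (use assms in \<open>auto simp: in_keys_iff\<close>)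
  finally show ?thesis .
qed

lemma mul_add_left: "(a + b) \<odot> c = a \<odot> c + b \<odot> c"
proof -
  let ?S = "Poly_Mapping.keys a \<union> Poly_Mapping.keys b \<union> Poly_Mapping.keys (a + b)"
  show ?thesis
    by (subst (1 2 3) mul_eq_sum[where S = ?S and T = "Poly_Mapping.keys c"])
      (auto simp: lookup_add distrib_right single_add sum.distrib)
qed

lemma mul_add_right: "c \<odot> (a + b) = c \<odot> a + c \<odot> b"
proof -
  let ?T = "Poly_Mapping.keys a \<union> Poly_Mapping.keys b \<union> Poly_Mapping.keys (a + b)"
  show ?thesis
    by (subst (1 2 3) mul_eq_sum[where S = "Poly_Mapping.keys c" and T = ?T])
      (auto simp: lookup_add distrib_left distrib_right single_add sum.distrib)
qed

lemma mul_zero_left [simp]: "0 \<odot> a = 0"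
  unfolding sga_mul_def by simp

lemma mul_zero_right [simp]: "a \<odot> 0 = 0"
  unfolding sga_mul_def by simp

lemma mul_neg_left: "(- a) \<odot> b = - (a \<odot> b)"
  using mul_add_left[of a "- a" b] by (simp add: eq_neg_iff_add_eq_0 add.commute)

lemma mul_neg_right: "b \<odot> (- a) = - (b \<odot> a)"
  using mul_add_right[of b a "- a"] by (simp add: eq_neg_iff_add_eq_0 add.commute)

lemma mul_diff_left: "(a - b) \<odot> c = a \<odot> c - b \<odot> c"
  using mul_add_left[of a "- b" c] by (simp add: mul_neg_left)

lemma mul_diff_right: "c \<odot> (a - b) = c \<odot> a - c \<odot> b"
  using mul_add_right[of c a "- b"] by (simp add: mul_neg_right)

lemma single_mul_single: "Poly_Mapping.single x c \<odot> Poly_Mapping.single y d =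
   Poly_Mapping.single (fst x + fst y, snd x @ snd y) (c * d * chi_word chi (snd x) (fst y))"
  by (subst mul_eq_sum[where S = "{x}" and T = "{y}"]) auto

lemma mul_sum_left: "finite A \<Longrightarrow> sum f A \<odot> c = (\<Sum>i\<in>A. f i \<odot> c)"
  by (induction A rule: finite_induct) (auto simp: mul_add_left)

lemma mul_sum_right: "finite A \<Longrightarrow> c \<odot> sum f A = (\<Sum>i\<in>A. c \<odot> f i)"
  by (induction A rule: finite_induct) (auto simp: mul_add_right)

lemma sum_single_lookup: "(\<Sum>x\<in>Poly_Mapping.keys a. Poly_Mapping.single x (Poly_Mapping.lookup a x)) = a"
  by (rule poly_mapping_eqI) (simp add: lookup_sum lookup_single when_def in_keys_iff sum.If_cases)

lemma mul_assoc: "(a \<odot> b) \<odot> c = a \<odot> (b \<odot> c)"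
proof -
  define s where "s f x = Poly_Mapping.single x (Poly_Mapping.lookup f x)" for f :: "('g, 'k) sga" and x
  define A B C where "A = Poly_Mapping.keys a" "B = Poly_Mapping.keys b" "C = Poly_Mapping.keys c"
  have "finite A" "finite B" "finite C" unfolding A_B_C_def by auto
  have expand: "a = sum (s a) A" "b = sum (s b) B" "c = sum (s c) C"
    unfolding s_def A_B_C_def by (simp_all add: sum_single_lookup)
  have single_assoc: "(s a x \<odot> s b y) \<odot> s c z = s a x \<odot> (s b y \<odot> s c z)" for x y z
    unfolding s_def by (simp add: single_mul_single chi_word_append chi_word_add add.assoc mult_ac)
  have "(a \<odot> b) \<odot> c = (sum (s a) A \<odot> sum (s b) B) \<odot> sum (s c) C"
    by (simp only: expand[symmetric])
  also have "\<dots> = (\<Sum>z\<in>C. \<Sum>y\<in>B. \<Sum>x\<in>A. (s a x \<odot> s b y) \<odot> s c z)"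
    by (simp add: mul_sum_left mul_sum_right \<open>finite A\<close> \<open>finite B\<close> \<open>finite C\<close>)
  also have "\<dots> = (\<Sum>z\<in>C. \<Sum>y\<in>B. \<Sum>x\<in>A. s a x \<odot> (s b y \<odot> s c z))"
    unfolding single_assoc ..
  also have "\<dots> = sum (s a) A \<odot> (sum (s b) B \<odot> sum (s c) C)"
    by (simp add: mul_sum_left mul_sum_right \<open>finite A\<close> \<open>finite B\<close> \<open>finite C\<close>)
  also have "\<dots> = a \<odot> (b \<odot> c)"
    by (simp only: expand[symmetric])
  finally show ?thesis .
qed

lemma const_commute: "a \<odot> sga_const c = sga_const c \<odot> a"
proof -
  let ?s = "\<lambda>x. Poly_Mapping.single x (Poly_Mapping.lookup a x)"
  have "a \<odot> sga_const c = (\<Sum>x\<in>Poly_Mapping.keys a. ?s x \<odot> sga_const c)"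
    by (subst (1) sum_single_lookup[of a, symmetric]) (simp add: mul_sum_left)
  also have "\<dots> = (\<Sum>x\<in>Poly_Mapping.keys a. sga_const c \<odot> ?s x)"
    by (rule sum.cong) (auto simp: sga_const_def single_mul_single mult.commute)
  also have "\<dots> = sga_const c \<odot> a"
    by (subst (2) sum_single_lookup[of a, symmetric]) (simp add: mul_sum_right)
  finally show ?thesis .
qed

lemma const_one_mul: "sga_const 1 \<odot> a = a"
proof -
  have "sga_const 1 \<odot> a =
      (\<Sum>x\<in>Poly_Mapping.keys a. sga_const 1 \<odot> Poly_Mapping.single x (Poly_Mapping.lookup a x))"
    by (subst (1) sum_single_lookup[of a, symmetric]) (simp add: mul_sum_right)
  also have "\<dots> = a"
    by (simp add: sga_const_def single_mul_single sum_single_lookup)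
  finally show ?thesis .
qed

lemma const_mul_const: "sga_const c \<odot> sga_const d = sga_const (c * d)"
  by (simp add: sga_const_def single_mul_single)

definition smul :: "'k \<Rightarrow> ('g, 'k) sga \<Rightarrow> ('g, 'k) sga" where
  "smul c a = sga_const c \<odot> a"

lemma smul_mul_left: "smul c a \<odot> b = smul c (a \<odot> b)"
  unfolding smul_def by (simp add: mul_assoc)

lemma smul_mul_right: "a \<odot> smul c b = smul c (a \<odot> b)"
  unfolding smul_def by (simp add: mul_assoc[symmetric] const_commute)

lemma smul_smul: "smul c (smul d a) = smul (c * d) a"
  unfolding smul_def by (simp add: mul_assoc[symmetric] const_mul_const)

lemma smul_one [simp]: "smul 1 a = a"
  unfolding smul_def by (simp add: const_one_mul)

lemma smul_zero [simp]: "smul c 0 = 0"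
  unfolding smul_def by simp

lemma smul_zero_scalar [simp]: "smul 0 a = 0"
  unfolding smul_def sga_const_def by simp

lemma smul_add_scalar: "smul (c + d) a = smul c a + smul d a"
  unfolding smul_def sga_const_def by (simp add: single_add mul_add_left)

lemma smul_add: "smul c (a + b) = smul c a + smul c b"
  unfolding smul_def by (simp add: mul_add_right)

lemma smul_diff: "smul c (a - b) = smul c a - smul c b"
  unfolding smul_def by (simp add: mul_diff_right)

lemma smul_neg: "smul c (- a) = - smul c a"
  unfolding smul_def by (simp add: mul_neg_right)

lemma smul_neg_scalar: "smul (- c) a = - smul c a"
  using smul_add_scalar[of c "- c" a] by (simp add: smul_def sga_const_def eq_neg_iff_add_eq_0 add.commute)

lemma smul_diff_scalar: "smul (c - d) a = smul c a - smul d a"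
  using smul_add_scalar[of c "- d" a] by (simp add: smul_neg_scalar)

abbreviation p :: "nat list \<Rightarrow> nat list \<Rightarrow> 'k" where "p \<equiv> pw chi g"

lemma p_append_left: "p (u @ v) w = p u w * p v w"
  unfolding pw_def by (simp add: chi_word_append)

lemma p_append_right: "p u (v @ w) = p u v * p u w"
  unfolding pw_def g_word_def by (simp add: chi_word_add)

lemma p_Nil_left [simp]: "p [] v = 1"
  unfolding pw_def by simp

lemma p_Nil_right [simp]: "p u [] = 1"
  unfolding pw_def g_word_def by simp

lemma p_letters: "p [i] [j] = chi i (g j)"
  unfolding pw_def g_word_def chi_word_def by simp

lemma p_nonzero: "p u v \<noteq> 0"
  unfolding pw_def by (rule chi_word_nonzero)

abbreviation br where "br \<equiv> sbr chi g"

lemma br_eq: "br \<alpha> a \<beta> b = a \<odot> b - smul (p \<alpha> \<beta>) (b \<odot> a)"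
  unfolding sbr_def smul_def by (simp add: mul_assoc)

lemmas mul_expand = mul_add_left mul_add_right mul_diff_left mul_diff_right
  mul_neg_left mul_neg_right mul_assoc smul_mul_left smul_mul_right smul_smul smul_add smul_diff smul_neg
  p_append_left p_append_right

lemmas br_expand = br_eq mul_expand

lemma br_mul_right:
  "br \<alpha> a (\<beta> @ \<gamma>) (b \<odot> c) = br \<alpha> a \<beta> b \<odot> c + smul (p \<alpha> \<beta>) (b \<odot> br \<alpha> a \<gamma> c)"
  by (simp add: br_expand algebra_simps)

lemma br_mul_left:
  "br (\<alpha> @ \<beta>) (a \<odot> b) \<gamma> c = smul (p \<beta> \<gamma>) (br \<alpha> a \<gamma> c \<odot> b) + a \<odot> br \<beta> b \<gamma> c"
  by (simp add: br_expand algebra_simps)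

lemma br_jacobi:
  "br \<alpha> a (\<beta> @ \<gamma>) (br \<beta> b \<gamma> c) = br (\<alpha> @ \<beta>) (br \<alpha> a \<beta> b) \<gamma> c
     + smul (p \<alpha> \<beta>) (b \<odot> br \<alpha> a \<gamma> c) - smul (p \<beta> \<gamma>) (br \<alpha> a \<gamma> c \<odot> b)"
  by (simp add: br_expand algebra_simps)

lemma br_swap:
  "br \<beta> b \<alpha> a = smul (- p \<beta> \<alpha>) (br \<alpha> a \<beta> b) + smul (1 - p \<alpha> \<beta> * p \<beta> \<alpha>) (b \<odot> a)"
  by (simp add: br_expand smul_diff_scalar smul_neg_scalar algebra_simps)

lemma br_diff_smul_right: "br \<alpha> a \<beta> (x - smul c y) = br \<alpha> a \<beta> x - smul c (br \<alpha> a \<beta> y)"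
  by (simp add: br_expand algebra_simps mult.commute)

lemma br_diff_smul_left: "br \<alpha> (x - smul c y) \<beta> b = br \<alpha> x \<beta> b - smul c (br \<alpha> y \<beta> b)"
  by (simp add: br_expand algebra_simps mult.commute)

lemma br_diff_right: "br \<alpha> a \<beta> (x - y) = br \<alpha> a \<beta> x - br \<alpha> a \<beta> y"
  by (simp add: br_expand algebra_simps)

lemma br_diff_left: "br \<alpha> (x - y) \<beta> b = br \<alpha> x \<beta> b - br \<alpha> y \<beta> b"
  by (simp add: br_expand algebra_simps)

lemma br_smul_left: "br \<alpha> (smul c x) \<beta> b = smul c (br \<alpha> x \<beta> b)"
  by (simp add: br_expand algebra_simps mult.commute)

lemma br_commute_degree_right: "br \<alpha> a (\<beta> @ \<gamma>) b = br \<alpha> a (\<gamma> @ \<beta>) b"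
  by (simp add: br_eq p_append_right mult.commute)

lemma br_commute_degree_left: "br (\<alpha> @ \<beta>) a \<gamma> b = br (\<beta> @ \<alpha>) a \<gamma> b"
  by (simp add: br_eq p_append_left mult.commute)

abbreviation zero_mod :: "('g, 'k) sga set \<Rightarrow> ('g, 'k) sga \<Rightarrow> bool" where
  "zero_mod R a \<equiv> a \<in> sga_ideal chi R"

lemma zero_mod_0: "zero_mod R 0" by (rule sga_ideal.zero)
lemma zero_mod_add: "zero_mod R a \<Longrightarrow> zero_mod R b \<Longrightarrow> zero_mod R (a + b)" by (rule sga_ideal.add)
lemma zero_mod_mul_left: "zero_mod R a \<Longrightarrow> zero_mod R (c \<odot> a)" by (rule sga_ideal.lmul)
lemma zero_mod_mul_right: "zero_mod R a \<Longrightarrow> zero_mod R (a \<odot> c)" by (rule sga_ideal.rmul)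
lemma zero_mod_smul: "zero_mod R a \<Longrightarrow> zero_mod R (smul c a)"
  unfolding smul_def by (rule sga_ideal.lmul)

lemma zero_mod_neg: "zero_mod R a \<Longrightarrow> zero_mod R (- a)"
  using zero_mod_smul[where c = "- 1"] by (simp add: smul_neg_scalar)

lemma zero_mod_diff: "zero_mod R a \<Longrightarrow> zero_mod R b \<Longrightarrow> zero_mod R (a - b)"
  using zero_mod_add[where b = "- b"] zero_mod_neg by simp

lemma zero_mod_br_left: "zero_mod R a \<Longrightarrow> zero_mod R (br \<alpha> a \<beta> b)"
  unfolding br_eq by (intro zero_mod_diff zero_mod_mul_left zero_mod_mul_right zero_mod_smul)

lemma zero_mod_br_right: "zero_mod R b \<Longrightarrow> zero_mod R (br \<alpha> a \<beta> b)"
  unfolding br_eq by (intro zero_mod_diff zero_mod_mul_left zero_mod_mul_right zero_mod_smul)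

definition cong_mod :: "('g, 'k) sga set \<Rightarrow> ('g, 'k) sga \<Rightarrow> ('g, 'k) sga \<Rightarrow> bool" where
  "cong_mod R a b \<longleftrightarrow> zero_mod R (a - b)"

lemma cong_mod_refl [simp]: "cong_mod R a a"
  unfolding cong_mod_def by (simp add: zero_mod_0)

lemma cong_mod_sym: "cong_mod R a b \<Longrightarrow> cong_mod R b a"
  unfolding cong_mod_def using zero_mod_neg by fastforce

lemma cong_mod_trans [trans]: "cong_mod R a b \<Longrightarrow> cong_mod R b c \<Longrightarrow> cong_mod R a c"
  unfolding cong_mod_def using zero_mod_add by fastforce

lemma eq_cong_mod_trans [trans]: "a = b \<Longrightarrow> cong_mod R b c \<Longrightarrow> cong_mod R a c"
  by simp

lemma cong_mod_eq_trans [trans]: "cong_mod R a b \<Longrightarrow> b = c \<Longrightarrow> cong_mod R a c"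
  by simp

lemma zero_mod_cong: "cong_mod R a b \<Longrightarrow> zero_mod R b \<Longrightarrow> zero_mod R a"
  unfolding cong_mod_def using zero_mod_add by fastforce

lemma cong_mod_add: "cong_mod R a b \<Longrightarrow> cong_mod R c d \<Longrightarrow> cong_mod R (a + c) (b + d)"
  unfolding cong_mod_def using zero_mod_add by (fastforce simp: algebra_simps)

lemma cong_mod_diff: "cong_mod R a b \<Longrightarrow> cong_mod R c d \<Longrightarrow> cong_mod R (a - c) (b - d)"
  unfolding cong_mod_def using zero_mod_diff by (fastforce simp: algebra_simps)

lemma cong_mod_smul: "cong_mod R a b \<Longrightarrow> cong_mod R (smul c a) (smul c b)"
  unfolding cong_mod_def using zero_mod_smul by (fastforce simp: smul_diff[symmetric])

lemma cong_mod_mul_left: "cong_mod R a b \<Longrightarrow> cong_mod R (c \<odot> a) (c \<odot> b)"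
  unfolding cong_mod_def using zero_mod_mul_left by (fastforce simp: mul_diff_right[symmetric])

lemma cong_mod_mul_right: "cong_mod R a b \<Longrightarrow> cong_mod R (a \<odot> c) (b \<odot> c)"
  unfolding cong_mod_def using zero_mod_mul_right by (fastforce simp: mul_diff_left[symmetric])

lemma cong_mod_br_left: "cong_mod R a b \<Longrightarrow> cong_mod R (br \<alpha> a \<beta> c) (br \<alpha> b \<beta> c)"
  unfolding cong_mod_def using zero_mod_br_left by (fastforce simp: br_diff_left[symmetric])

lemma cong_mod_br_right: "cong_mod R a b \<Longrightarrow> cong_mod R (br \<alpha> c \<beta> a) (br \<alpha> c \<beta> b)"
  unfolding cong_mod_def using zero_mod_br_right by (fastforce simp: br_diff_right[symmetric])

lemma cong_mod_if_eq_add: "x = y + z \<Longrightarrow> zero_mod R y \<Longrightarrow> cong_mod R x z"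
  unfolding cong_mod_def by simp

definition skew_commute :: "('g, 'k) sga set \<Rightarrow> nat list \<Rightarrow> ('g, 'k) sga \<Rightarrow> nat list \<Rightarrow> ('g, 'k) sga \<Rightarrow> bool"
  where "skew_commute R \<alpha> a \<beta> b \<longleftrightarrow> zero_mod R (br \<alpha> a \<beta> b)"

lemma cong_mod_mul_swap:
  "skew_commute R \<alpha> a \<beta> b \<Longrightarrow> cong_mod R (a \<odot> b) (smul (p \<alpha> \<beta>) (b \<odot> a))"
  unfolding skew_commute_def cong_mod_def br_eq .

definition pp :: "nat list \<Rightarrow> nat list \<Rightarrow> 'k" where
  "pp u v = p u v * p v u"

lemma pp_append_left: "pp (u @ v) w = pp u w * pp v w"
  unfolding pp_def by (simp add: p_append_left p_append_right mult_ac)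

lemma pp_append_right: "pp u (v @ w) = pp u v * pp u w"
  unfolding pp_def by (simp add: p_append_left p_append_right mult_ac)

lemma pp_eq_one: "(\<And>i j. i \<in> set u \<Longrightarrow> j \<in> set v \<Longrightarrow> pp [i] [j] = 1) \<Longrightarrow> pp u v = 1"
proof (induction u)
  case (Cons i u)
  have "pp [i] v = 1" using Cons.prems
  proof (induction v)
    case (Cons j v)
    then show ?case using pp_append_right[of "[i]" "[j]" v] by simp
  qed (simp add: pp_def)
  then show ?case using Cons pp_append_left[of "[i]" u v] by simp
qed (simp add: pp_def)

lemma skew_commute_sym:
  "pp \<alpha> \<beta> = 1 \<Longrightarrow> skew_commute R \<alpha> a \<beta> b \<Longrightarrow> skew_commute R \<beta> b \<alpha> a"
  unfolding skew_commute_def pp_def by (subst br_swap) (simp add: zero_mod_smul)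

lemma skew_commute_mul_right:
  "skew_commute R \<alpha> a \<beta> b \<Longrightarrow> skew_commute R \<alpha> a \<gamma> c \<Longrightarrow> skew_commute R \<alpha> a (\<beta> @ \<gamma>) (b \<odot> c)"
  unfolding skew_commute_def br_mul_right
  by (intro zero_mod_add zero_mod_mul_right zero_mod_smul zero_mod_mul_left)

lemma skew_commute_mul_left:
  "skew_commute R \<alpha> a \<gamma> c \<Longrightarrow> skew_commute R \<beta> b \<gamma> c \<Longrightarrow> skew_commute R (\<alpha> @ \<beta>) (a \<odot> b) \<gamma> c"
  unfolding skew_commute_def br_mul_left
  by (intro zero_mod_add zero_mod_mul_right zero_mod_smul zero_mod_mul_left)

lemma skew_commute_br_right:
  assumes "skew_commute R \<alpha> a \<beta> b" "skew_commute R \<alpha> a \<gamma> c"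
  shows "skew_commute R \<alpha> a (\<beta> @ \<gamma>) (br \<beta> b \<gamma> c)"
proof -
  have "skew_commute R \<alpha> a (\<beta> @ \<gamma>) (b \<odot> c)" "skew_commute R \<alpha> a (\<beta> @ \<gamma>) (c \<odot> b)"
    using skew_commute_mul_right[OF assms] skew_commute_mul_right[OF assms(2,1)]
    by (simp_all add: skew_commute_def br_commute_degree_right)
  then show ?thesis
    unfolding skew_commute_def br_eq[of \<beta> b] br_diff_smul_right by (intro zero_mod_diff zero_mod_smul)
qed

lemma skew_commute_br_left:
  assumes "skew_commute R \<alpha> a \<gamma> c" "skew_commute R \<beta> b \<gamma> c"
  shows "skew_commute R (\<alpha> @ \<beta>) (br \<alpha> a \<beta> b) \<gamma> c"
proof -
  have "skew_commute R (\<alpha> @ \<beta>) (a \<odot> b) \<gamma> c" "skew_commute R (\<alpha> @ \<beta>) (b \<odot> a) \<gamma> c"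
    using skew_commute_mul_left[OF assms] skew_commute_mul_left[OF assms(2,1)]
    by (simp_all add: skew_commute_def br_commute_degree_left)
  then show ?thesis
    unfolding skew_commute_def br_eq[of \<alpha> a] br_diff_smul_left by (intro zero_mod_diff zero_mod_smul)
qed

lemma cong_mod_jacobi:
  "skew_commute R \<alpha> a \<gamma> c \<Longrightarrow>
    cong_mod R (br \<alpha> a (\<beta> @ \<gamma>) (br \<beta> b \<gamma> c)) (br (\<alpha> @ \<beta>) (br \<alpha> a \<beta> b) \<gamma> c)"
  unfolding cong_mod_def skew_commute_def
  by (subst br_jacobi) (simp add: zero_mod_smul zero_mod_diff zero_mod_mul_left zero_mod_mul_right)

function ivl_br :: "nat \<Rightarrow> nat \<Rightarrow> ('g, 'k) sga" where
  "ivl_br k m = (if k < m then br [k] (sga_X k) (ivl (Suc k) m) (ivl_br (Suc k) m) else sga_X k)"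
  by pat_completeness auto
termination by (relation "measure (\<lambda>(k, m). m - k)") auto

declare ivl_br.simps [simp del]

lemma ivl_br_step: "k < m \<Longrightarrow> ivl_br k m = br [k] (sga_X k) (ivl (Suc k) m) (ivl_br (Suc k) m)"
  by (subst ivl_br.simps) simp

lemma ivl_br_same: "ivl_br k k = sga_X k"
  by (subst ivl_br.simps) simp

lemma ivl_same: "ivl k k = [k]"
  by (simp add: upt_Suc)

lemma std_bracket_ivl: "k \<le> m \<Longrightarrow> std_bracket chi g (ivl k m) = ivl_br k m"
proof (induction k m rule: ivl_br.induct)
  case (1 k m)
  show ?case
  proof (cases "k < m")
    case True
    then have "take 1 (ivl k m) = [k]" "drop 1 (ivl k m) = ivl (Suc k) m"
      by (simp_all add: upt_conv_Cons)
    with True 1 show ?thesis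
      by (subst std_bracket_std_split) (simp_all add: std_split_ivl ivl_br_step)
  qed (use 1 in \<open>simp add: ivl_same ivl_br_same\<close>)
qed

lemma skew_commute_ivl_br_right:
  "s \<le> t \<Longrightarrow> (\<And>j. s \<le> j \<Longrightarrow> j \<le> t \<Longrightarrow> skew_commute R \<alpha> a [j] (sga_X j)) \<Longrightarrow>
    skew_commute R \<alpha> a (ivl s t) (ivl_br s t)"
proof (induction s t rule: ivl_br.induct)
  case (1 s t)
  show ?case
  proof (cases "s < t")
    case True
    then have "skew_commute R \<alpha> a ([s] @ ivl (Suc s) t) (br [s] (sga_X s) (ivl (Suc s) t) (ivl_br (Suc s) t))"
      using 1 by (intro skew_commute_br_right) auto
    with True show ?thesis by (simp add: ivl_br_step upt_conv_Cons)
  qed (use 1 in \<open>simp add: ivl_br_same ivl_same\<close>)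
qed

lemma skew_commute_ivl_br_left:
  "k \<le> m \<Longrightarrow> (\<And>j. k \<le> j \<Longrightarrow> j \<le> m \<Longrightarrow> skew_commute R [j] (sga_X j) \<gamma> c) \<Longrightarrow>
    skew_commute R (ivl k m) (ivl_br k m) \<gamma> c"
proof (induction k m rule: ivl_br.induct)
  case (1 k m)
  show ?case
  proof (cases "k < m")
    case True
    then have "skew_commute R ([k] @ ivl (Suc k) m) (br [k] (sga_X k) (ivl (Suc k) m) (ivl_br (Suc k) m)) \<gamma> c"
      using 1 by (intro skew_commute_br_left) auto
    with True show ?thesis by (simp add: ivl_br_step upt_conv_Cons)
  qed (use 1 in \<open>simp add: ivl_br_same ivl_same\<close>)
qed

end

section \<open>Brackets of three generators of type \<open>A\<^sub>3\<close>\<close>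

locale serre_triple = skew_group_algebra chi g
  for chi :: "nat \<Rightarrow> 'g::ab_group_add \<Rightarrow> 'k::field" and g +
  fixes R :: "('g, 'k) sga set" and \<alpha> \<beta> \<gamma> :: "nat list" and a b c :: "('g, 'k) sga" and q :: 'k
  assumes q_nonzero: "q \<noteq> 0" and q_not_minus_one: "q \<noteq> - 1"
    and p_bb: "p \<beta> \<beta> = q" and p_bc_cb: "p \<beta> \<gamma> * p \<gamma> \<beta> = inverse q"
    and serre_ab_b: "zero_mod R (br (\<alpha> @ \<beta>) (br \<alpha> a \<beta> b) \<beta> b)"
    and serre_b_bc: "zero_mod R (br \<beta> b (\<beta> @ \<gamma>) (br \<beta> b \<gamma> c))"
    and skew_commute_ac: "skew_commute R \<alpha> a \<gamma> c"
begin

abbreviation ab where "ab \<equiv> br \<alpha> a \<beta> b"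
abbreviation bc where "bc \<equiv> br \<beta> b \<gamma> c"
abbreviation abc where "abc \<equiv> br \<alpha> a (\<beta> @ \<gamma>) bc"

lemma p_cb: "p \<gamma> \<beta> = inverse (q * p \<beta> \<gamma>)"
  using p_bc_cb p_nonzero[of \<beta> \<gamma>] q_nonzero by (simp add: field_simps)

text \<open>Expanding \<open>[ab, bc]\<close> by the Jacobi identity in its two possible ways gives two
  congruences; their difference is a multiple of \<open>[abc, b]\<close> by the unit \<open>1 + q\<close>.\<close>

lemma cong_ab_bc_left:
  "cong_mod R (br (\<alpha> @ \<beta>) ab (\<beta> @ \<gamma>) bc) (smul (p (\<alpha> @ \<beta>) \<beta>) (b \<odot> abc) - smul (p \<beta> \<gamma>) (abc \<odot> b))"
proof -
  have "cong_mod R (br (\<alpha> @ \<beta>) ab (\<beta> @ \<gamma>) bc)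
      (smul (p (\<alpha> @ \<beta>) \<beta>) (b \<odot> br (\<alpha> @ \<beta>) ab \<gamma> c) - smul (p \<beta> \<gamma>) (br (\<alpha> @ \<beta>) ab \<gamma> c \<odot> b))"
    by (rule cong_mod_if_eq_add[OF _ zero_mod_br_left[OF serre_ab_b]]) (subst br_jacobi, simp)
  also have "cong_mod R \<dots> (smul (p (\<alpha> @ \<beta>) \<beta>) (b \<odot> abc) - smul (p \<beta> \<gamma>) (abc \<odot> b))"
    using cong_mod_sym[OF cong_mod_jacobi[OF skew_commute_ac]]
    by (intro cong_mod_diff cong_mod_smul cong_mod_mul_left cong_mod_mul_right)
  finally show ?thesis .
qed

lemma cong_ab_bc_right:
  "cong_mod R (br (\<alpha> @ \<beta>) ab (\<beta> @ \<gamma>) bc) (smul (p \<beta> (\<beta> @ \<gamma>)) (abc \<odot> b) - smul (p \<alpha> \<beta>) (b \<odot> abc))"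
proof (rule cong_mod_if_eq_add)
  show "zero_mod R (br \<alpha> a (\<beta> @ \<beta> @ \<gamma>) (br \<beta> b (\<beta> @ \<gamma>) bc))"
    by (intro zero_mod_br_right serre_b_bc)
  have "br \<alpha> a (\<beta> @ \<beta> @ \<gamma>) (br \<beta> b (\<beta> @ \<gamma>) bc) = br (\<alpha> @ \<beta>) ab (\<beta> @ \<gamma>) bc
      + smul (p \<alpha> \<beta>) (b \<odot> abc) - smul (p \<beta> (\<beta> @ \<gamma>)) (abc \<odot> b)"
    by (rule br_jacobi)
  then show "br (\<alpha> @ \<beta>) ab (\<beta> @ \<gamma>) bc = br \<alpha> a (\<beta> @ \<beta> @ \<gamma>) (br \<beta> b (\<beta> @ \<gamma>) bc) +
      (smul (p \<beta> (\<beta> @ \<gamma>)) (abc \<odot> b) - smul (p \<alpha> \<beta>) (b \<odot> abc))"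
    by (simp add: algebra_simps)
qed

lemma serre_abc_b: "zero_mod R (br (\<alpha> @ \<beta> @ \<gamma>) abc \<beta> b)"
proof -
  let ?u = "(1 + q) * p \<alpha> \<beta>" and ?v = "(1 + q) * p \<beta> \<gamma>"
  have "zero_mod R ((smul (p (\<alpha> @ \<beta>) \<beta>) (b \<odot> abc) - smul (p \<beta> \<gamma>) (abc \<odot> b)) -
      (smul (p \<beta> (\<beta> @ \<gamma>)) (abc \<odot> b) - smul (p \<alpha> \<beta>) (b \<odot> abc)))"
    using cong_mod_trans[OF cong_mod_sym[OF cong_ab_bc_left] cong_ab_bc_right]
    unfolding cong_mod_def .
  also have "(smul (p (\<alpha> @ \<beta>) \<beta>) (b \<odot> abc) - smul (p \<beta> \<gamma>) (abc \<odot> b)) -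
      (smul (p \<beta> (\<beta> @ \<gamma>)) (abc \<odot> b) - smul (p \<alpha> \<beta>) (b \<odot> abc)) = smul ?u (b \<odot> abc) - smul ?v (abc \<odot> b)"
    by (simp add: p_append_left p_append_right p_bb smul_add_scalar algebra_simps)
  finally have "zero_mod R (smul (- inverse ?v) (smul ?u (b \<odot> abc) - smul ?v (abc \<odot> b)))"
    by (rule zero_mod_smul)
  moreover have "?v \<noteq> 0"
    using q_not_minus_one p_nonzero[of \<beta> \<gamma>] by (auto simp: add_eq_0_iff)
  then have "- inverse ?v * ?u = - p (\<alpha> @ \<beta> @ \<gamma>) \<beta>" "- inverse ?v * ?v = - 1"
    using q_nonzero p_nonzero[of \<beta> \<gamma>] by (simp_all add: p_append_left p_bb p_cb field_simps)
  ultimately show ?thesis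
    by (simp add: smul_diff smul_smul smul_neg_scalar br_eq)
qed

lemma cong_ab_bc:
  "cong_mod R (br (\<alpha> @ \<beta>) ab (\<beta> @ \<gamma>) bc) (smul ((q - 1) * p \<alpha> \<beta>) (b \<odot> abc))"
proof -
  have "cong_mod R (abc \<odot> b) (smul (p (\<alpha> @ \<beta> @ \<gamma>) \<beta>) (b \<odot> abc))"
    using serre_abc_b by (intro cong_mod_mul_swap) (simp add: skew_commute_def)
  then have "cong_mod R (smul (p (\<alpha> @ \<beta>) \<beta>) (b \<odot> abc) - smul (p \<beta> \<gamma>) (abc \<odot> b))
      (smul (p (\<alpha> @ \<beta>) \<beta>) (b \<odot> abc) - smul (p \<beta> \<gamma>) (smul (p (\<alpha> @ \<beta> @ \<gamma>) \<beta>) (b \<odot> abc)))"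
    by (intro cong_mod_diff cong_mod_smul) simp_all
  also have "\<dots> = smul ((q - 1) * p \<alpha> \<beta>) (b \<odot> abc)"
    using q_nonzero p_nonzero[of \<beta> \<gamma>]
    by (simp add: smul_smul flip: smul_diff_scalar) (simp add: p_append_left p_bb p_cb field_simps)
  finally show ?thesis using cong_ab_bc_left by (blast intro: cong_mod_trans)
qed

lemma serre_a_abc:
  assumes "zero_mod R (br \<alpha> a (\<alpha> @ \<beta>) ab)"
  shows "zero_mod R (br \<alpha> a (\<alpha> @ \<beta> @ \<gamma>) abc)"
proof -
  have "cong_mod R (br \<alpha> a (\<alpha> @ \<beta> @ \<gamma>) abc) (br \<alpha> a ((\<alpha> @ \<beta>) @ \<gamma>) (br (\<alpha> @ \<beta>) ab \<gamma> c))"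
    using cong_mod_jacobi[OF skew_commute_ac] by (simp add: cong_mod_br_right)
  also have "cong_mod R \<dots> (br (\<alpha> @ \<alpha> @ \<beta>) (br \<alpha> a (\<alpha> @ \<beta>) ab) \<gamma> c)"
    by (rule cong_mod_jacobi[OF skew_commute_ac])
  finally show ?thesis using assms by (blast intro: zero_mod_cong zero_mod_br_left)
qed

lemma cong_ab_a:
  assumes "p \<alpha> \<alpha> = q" "p \<alpha> \<beta> * p \<beta> \<alpha> = inverse q" "zero_mod R (br \<alpha> a (\<alpha> @ \<beta>) ab)"
  shows "cong_mod R (br (\<alpha> @ \<beta>) ab \<alpha> a) (smul (1 - q) (ab \<odot> a))"
proof (rule cong_mod_if_eq_add)
  have "p \<alpha> (\<alpha> @ \<beta>) * p (\<alpha> @ \<beta>) \<alpha> = p \<alpha> \<alpha> * p \<alpha> \<alpha> * (p \<alpha> \<beta> * p \<beta> \<alpha>)"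
    by (simp add: p_append_left p_append_right mult_ac)
  also have "\<dots> = q" using assms(1,2) q_nonzero by (simp add: field_simps)
  finally show "br (\<alpha> @ \<beta>) ab \<alpha> a =
      smul (- p (\<alpha> @ \<beta>) \<alpha>) (br \<alpha> a (\<alpha> @ \<beta>) ab) + smul (1 - q) (ab \<odot> a)"
    by (subst br_swap) simp
  show "zero_mod R (smul (- p (\<alpha> @ \<beta>) \<alpha>) (br \<alpha> a (\<alpha> @ \<beta>) ab))"
    using assms(3) by (rule zero_mod_smul)
qed

lemma cong_abc_a:
  assumes "zero_mod R (br \<alpha> a (\<alpha> @ \<beta>) ab)"
  shows "cong_mod R (abc \<odot> a) (smul (inverse (p \<alpha> (\<alpha> @ \<beta> @ \<gamma>))) (a \<odot> abc))"
proof -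
  let ?\<iota> = "inverse (p \<alpha> (\<alpha> @ \<beta> @ \<gamma>))"
  have "cong_mod R (smul ?\<iota> (a \<odot> abc)) (smul ?\<iota> (smul (p \<alpha> (\<alpha> @ \<beta> @ \<gamma>)) (abc \<odot> a)))"
    using serre_a_abc[OF assms] unfolding skew_commute_def[symmetric]
    by (intro cong_mod_smul cong_mod_mul_swap)
  then show ?thesis by (simp add: smul_smul p_nonzero cong_mod_sym)
qed

lemma cong_ab_a_bc:
  assumes "p \<alpha> \<alpha> = q" "p \<alpha> \<beta> * p \<beta> \<alpha> = inverse q" "zero_mod R (br \<alpha> a (\<alpha> @ \<beta>) ab)"
  shows "cong_mod R (br ((\<alpha> @ \<beta>) @ \<alpha>) (br (\<alpha> @ \<beta>) ab \<alpha> a) (\<beta> @ \<gamma>) bc)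
    (smul (1 - q) (smul (p \<alpha> (\<beta> @ \<gamma>)) (br (\<alpha> @ \<beta>) ab (\<beta> @ \<gamma>) bc \<odot> a) + ab \<odot> abc))"
  using cong_mod_br_left[OF cong_ab_a[OF assms], of "(\<alpha> @ \<beta>) @ \<alpha>" "\<beta> @ \<gamma>" bc]
  unfolding br_smul_left br_mul_left .

lemma serre_ab_abc:
  assumes p_aa: "p \<alpha> \<alpha> = q" and p_ab_ba: "p \<alpha> \<beta> * p \<beta> \<alpha> = inverse q"
    and serre_a_ab: "zero_mod R (br \<alpha> a (\<alpha> @ \<beta>) ab)"
  shows "zero_mod R (br (\<alpha> @ \<beta>) ab (\<alpha> @ \<beta> @ \<gamma>) abc)"
proof -
  define k where "k = (q - 1) * p \<alpha> \<beta>"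
  define \<iota> where "\<iota> = inverse (p \<alpha> (\<alpha> @ \<beta> @ \<gamma>))"
  let ?D = "br (\<alpha> @ \<beta>) ab (\<beta> @ \<gamma>) bc"
  note abc_a = cong_abc_a[OF serre_a_ab, folded \<iota>_def]
  note ab_a_bc = cong_ab_a_bc[OF p_aa p_ab_ba serre_a_ab]
  have "br (\<alpha> @ \<beta>) ab (\<alpha> @ \<beta> @ \<gamma>) abc = br ((\<alpha> @ \<beta>) @ \<alpha>) (br (\<alpha> @ \<beta>) ab \<alpha> a) (\<beta> @ \<gamma>) bc
      + smul (p (\<alpha> @ \<beta>) \<alpha>) (a \<odot> ?D) - smul (p \<alpha> (\<beta> @ \<gamma>)) (?D \<odot> a)"
    by (rule br_jacobi)
  also have "cong_mod R \<dots> (smul (1 - q) (smul (p \<alpha> (\<beta> @ \<gamma>)) (?D \<odot> a) + ab \<odot> abc)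
      + smul (p (\<alpha> @ \<beta>) \<alpha>) (a \<odot> ?D) - smul (p \<alpha> (\<beta> @ \<gamma>)) (?D \<odot> a))"
    using ab_a_bc by (intro cong_mod_diff cong_mod_add) simp_all
  also have "cong_mod R \<dots> (smul (1 - q) (smul (p \<alpha> (\<beta> @ \<gamma>)) (smul k (b \<odot> abc) \<odot> a) + ab \<odot> abc)
      + smul (p (\<alpha> @ \<beta>) \<alpha>) (a \<odot> smul k (b \<odot> abc)) - smul (p \<alpha> (\<beta> @ \<gamma>)) (smul k (b \<odot> abc) \<odot> a))"
    using cong_ab_bc unfolding k_def
    by (intro cong_mod_diff cong_mod_add cong_mod_smul cong_mod_mul_left cong_mod_mul_right) simp_all
  also have "\<dots> = smul (- (q * p \<alpha> (\<beta> @ \<gamma>) * k)) (b \<odot> (abc \<odot> a)) + smul (1 - q) (ab \<odot> abc)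
      + smul (p (\<alpha> @ \<beta>) \<alpha> * k) (a \<odot> (b \<odot> abc))"
    by (simp add: mul_expand smul_add_scalar smul_diff_scalar smul_neg_scalar algebra_simps)
  also have "cong_mod R \<dots> (smul (- (q * p \<alpha> (\<beta> @ \<gamma>) * k)) (b \<odot> smul \<iota> (a \<odot> abc)) + smul (1 - q) (ab \<odot> abc)
      + smul (p (\<alpha> @ \<beta>) \<alpha> * k) (a \<odot> (b \<odot> abc)))"
    using abc_a by (intro cong_mod_add cong_mod_smul cong_mod_mul_left) simp_all
  also have "\<dots> = smul (1 - q + p (\<alpha> @ \<beta>) \<alpha> * k) (a \<odot> (b \<odot> abc))
      + smul (- (q * p \<alpha> (\<beta> @ \<gamma>) * k) * \<iota> - (1 - q) * p \<alpha> \<beta>) (b \<odot> (a \<odot> abc))"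
    by (simp add: br_eq[of \<alpha> a \<beta> b] mul_expand smul_add_scalar smul_diff_scalar smul_neg_scalar algebra_simps)
  also have "1 - q + p (\<alpha> @ \<beta>) \<alpha> * k = 0"
    using p_ab_ba q_nonzero unfolding k_def by (simp add: p_append_left p_aa field_simps)
  also have "- (q * p \<alpha> (\<beta> @ \<gamma>) * k) * \<iota> - (1 - q) * p \<alpha> \<beta> = 0"
    using q_nonzero p_nonzero[of \<alpha> "\<beta> @ \<gamma>"] unfolding k_def \<iota>_def
    by (simp add: p_append_right[of \<alpha> \<alpha>] p_aa field_simps)
  finally show ?thesis unfolding cong_mod_def by simp
qed

end

section \<open>Brackets of interval words in \<open>U\<^sub>q\<^sup>+(\<frak>s\<frak>p\<^sub>2\<^sub>n)\<close>\<close>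

locale uq_sp = skew_group_algebra chi g
  for chi :: "nat \<Rightarrow> 'g::ab_group_add \<Rightarrow> 'k::field" and g +
  fixes n :: nat and q :: 'k
  assumes q_nonzero: "q \<noteq> 0" and q_not_minus_one: "q \<noteq> - 1"
    and p_ii: "\<And>i. 1 \<le> i \<Longrightarrow> i < n \<Longrightarrow> chi i (g i) = q"
    and p_adj: "\<And>i. 1 < i \<Longrightarrow> i < n \<Longrightarrow> chi i (g (i - 1)) * chi (i - 1) (g i) = inverse q"
    and p_far: "\<And>i j. 1 \<le> i \<Longrightarrow> i + 1 < j \<Longrightarrow> j \<le> n \<Longrightarrow> chi i (g j) * chi j (g i) = 1"
begin

abbreviation rels where "rels \<equiv> sp_rels n chi g"

lemma p_letter_self: "1 \<le> i \<Longrightarrow> i < n \<Longrightarrow> p [i] [i] = q"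
  by (simp add: p_letters p_ii)

lemma pp_letters_far:
  "1 \<le> i \<Longrightarrow> 1 \<le> j \<Longrightarrow> i < n \<Longrightarrow> j < n \<Longrightarrow> Suc i < j \<or> Suc j < i \<Longrightarrow> pp [i] [j] = 1"
  using p_far[of i j] p_far[of j i] by (auto simp: pp_def p_letters mult.commute)

lemma pp_letters_adj: "1 \<le> i \<Longrightarrow> Suc i < n \<Longrightarrow> pp [i] [Suc i] = inverse q"
  using p_adj[of "Suc i"] by (simp add: pp_def p_letters mult.commute)

lemma pp_ivl_letter_adj: "1 \<le> k \<Longrightarrow> k \<le> m \<Longrightarrow> Suc m < n \<Longrightarrow> pp (ivl k m) [Suc m] = inverse q"
proof -
  assume km: "1 \<le> k" "k \<le> m" "Suc m < n"
  have "pp [k..<m] [Suc m] = 1" by (rule pp_eq_one) (use km in \<open>auto intro!: pp_letters_far\<close>)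
  with km show ?thesis by (simp add: upt_Suc pp_append_left pp_letters_adj)
qed

lemma pp_letter_ivl_adj: "1 \<le> j \<Longrightarrow> Suc j \<le> m \<Longrightarrow> m < n \<Longrightarrow> pp [j] (ivl (Suc j) m) = inverse q"
proof -
  assume jm: "1 \<le> j" "Suc j \<le> m" "m < n"
  have "pp [j] (ivl (Suc (Suc j)) m) = 1" by (rule pp_eq_one) (use jm in \<open>auto intro!: pp_letters_far\<close>)
  with jm show ?thesis
    using pp_append_right[of "[j]" "[Suc j]"] by (simp add: upt_conv_Cons pp_letters_adj)
qed

lemma p_ivl_self: "1 \<le> k \<Longrightarrow> k \<le> m \<Longrightarrow> m < n \<Longrightarrow> p (ivl k m) (ivl k m) = q"
proof (induction m)
  case (Suc m)
  show ?case
  proof (cases "k = Suc m")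
    case False
    with Suc.prems have "k \<le> m" by simp
    have "p (ivl k m @ [Suc m]) (ivl k m @ [Suc m]) =
        p (ivl k m) (ivl k m) * pp (ivl k m) [Suc m] * p [Suc m] [Suc m]"
      unfolding pp_def by (simp add: p_append_left p_append_right mult_ac)
    also have "\<dots> = q"
      using Suc \<open>k \<le> m\<close> q_nonzero by (simp add: pp_ivl_letter_adj p_letter_self)
    finally show ?thesis using \<open>k \<le> m\<close> by (simp add: upt_Suc)
  qed (use Suc.prems in \<open>simp add: ivl_same p_letter_self\<close>)
qed simp

lemma serre_rel_left: "1 \<le> i \<Longrightarrow> Suc i < n \<Longrightarrow>
    zero_mod rels (br [i] (sga_X i) [i, Suc i] (br [i] (sga_X i) [Suc i] (sga_X (Suc i))))"
  by (rule sga_ideal.gen) (force simp: sp_rels_def)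

lemma serre_rel_right: "1 \<le> i \<Longrightarrow> Suc i < n \<Longrightarrow>
    zero_mod rels (br [i, Suc i] (br [i] (sga_X i) [Suc i] (sga_X (Suc i))) [Suc i] (sga_X (Suc i)))"
  by (rule sga_ideal.gen) (force simp: sp_rels_def)

lemma letters_skew_commute:
  assumes "1 \<le> i" "1 \<le> j" "i < n" "j < n" "Suc i < j \<or> Suc j < i"
  shows "skew_commute rels [i] (sga_X i) [j] (sga_X j)"
proof -
  have rel: "skew_commute rels [i] (sga_X i) [j] (sga_X j)" if "1 \<le> i" "Suc i < j" "j < n" for i j
    unfolding skew_commute_def using that by (intro sga_ideal.gen) (force simp: sp_rels_def)
  show ?thesis
    using assms rel[of i j] rel[of j i] skew_commute_sym[OF pp_letters_far[of j i]] by auto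
qed

lemma letter_skew_commute_ivl_br:
  "1 \<le> i \<Longrightarrow> i < n \<Longrightarrow> 1 \<le> s \<Longrightarrow> s \<le> t \<Longrightarrow> t < n \<Longrightarrow> Suc i < s \<or> Suc t < i \<Longrightarrow>
    skew_commute rels [i] (sga_X i) (ivl s t) (ivl_br s t)"
  by (rule skew_commute_ivl_br_right) (auto intro: letters_skew_commute)

lemma ivl_br_skew_commute_far:
  "1 \<le> k \<Longrightarrow> k \<le> m \<Longrightarrow> s \<le> t \<Longrightarrow> t < n \<Longrightarrow> Suc m < s \<Longrightarrow>
    skew_commute rels (ivl k m) (ivl_br k m) (ivl s t) (ivl_br s t)"
  by (rule skew_commute_ivl_br_left) (auto intro: letter_skew_commute_ivl_br)

lemma serre_letter_ivl_br:
  assumes "1 \<le> k" "k < m" "m < n"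
  shows "zero_mod rels (br [k] (sga_X k) (ivl k m) (ivl_br k m))"
proof (cases "m = Suc k")
  case True
  with assms serre_rel_left[of k] show ?thesis
    by (simp add: ivl_br_step ivl_br_same ivl_same upt_Suc)
next
  case False
  let ?\<gamma> = "ivl (Suc (Suc k)) m" and ?c = "ivl_br (Suc (Suc k)) m"
  let ?xy = "br [k] (sga_X k) [Suc k] (sga_X (Suc k))"
  have sc: "skew_commute rels [k] (sga_X k) ?\<gamma> ?c"
    using assms False by (intro letter_skew_commute_ivl_br) auto
  have ivl: "ivl k m = ([k] @ [Suc k]) @ ?\<gamma>" "ivl (Suc k) m = [Suc k] @ ?\<gamma>"
    using assms False by (simp_all add: upt_conv_Cons)
  have "ivl_br k m = br [k] (sga_X k) ([Suc k] @ ?\<gamma>) (br [Suc k] (sga_X (Suc k)) ?\<gamma> ?c)"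
    using assms False by (simp add: ivl_br_step ivl(2))
  also have "cong_mod rels \<dots> (br ([k] @ [Suc k]) ?xy ?\<gamma> ?c)"
    by (rule cong_mod_jacobi[OF sc])
  finally have "cong_mod rels (ivl_br k m) (br ([k] @ [Suc k]) ?xy ?\<gamma> ?c)" .
  then have "cong_mod rels (br [k] (sga_X k) (ivl k m) (ivl_br k m))
      (br [k] (sga_X k) (([k] @ [Suc k]) @ ?\<gamma>) (br ([k] @ [Suc k]) ?xy ?\<gamma> ?c))"
    unfolding ivl(1) by (rule cong_mod_br_right)
  also have "cong_mod rels \<dots> (br ([k] @ [k] @ [Suc k]) (br [k] (sga_X k) ([k] @ [Suc k]) ?xy) ?\<gamma> ?c)"
    by (rule cong_mod_jacobi[OF sc])
  finally show ?thesis
    using serre_rel_left[of k] assms False by (auto intro: zero_mod_cong zero_mod_br_left)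
qed

lemma serre_ivl_br_last:
  "1 \<le> k \<Longrightarrow> k < m \<Longrightarrow> m < n \<Longrightarrow> zero_mod rels (br (ivl k m) (ivl_br k m) [m] (sga_X m))"
proof (induction k m rule: ivl_br.induct)
  case (1 k m)
  show ?case
  proof (cases "m = Suc k")
    case True
    with 1 serre_rel_right[of k] show ?thesis
      by (simp add: ivl_br_step ivl_br_same ivl_same upt_Suc)
  next
    case False
    let ?\<beta> = "ivl (Suc k) m" and ?b = "ivl_br (Suc k) m"
    have "skew_commute rels [k] (sga_X k) [m] (sga_X m)"
      using 1 False by (intro letters_skew_commute) auto
    then have "cong_mod rels (br [k] (sga_X k) (?\<beta> @ [m]) (br ?\<beta> ?b [m] (sga_X m)))
        (br ([k] @ ?\<beta>) (br [k] (sga_X k) ?\<beta> ?b) [m] (sga_X m))"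
      by (rule cong_mod_jacobi)
    moreover have "zero_mod rels (br [k] (sga_X k) (?\<beta> @ [m]) (br ?\<beta> ?b [m] (sga_X m)))"
      using 1 False by (intro zero_mod_br_right "1.IH") auto
    ultimately show ?thesis
      using 1 by (auto simp: ivl_br_step upt_conv_Cons intro: zero_mod_cong cong_mod_sym)
  qed
qed

lemma ivl_br_split:
  "1 \<le> k \<Longrightarrow> k \<le> m \<Longrightarrow> m < t \<Longrightarrow> t < n \<Longrightarrow>
    cong_mod rels (ivl_br k t) (br (ivl k m) (ivl_br k m) (ivl (Suc m) t) (ivl_br (Suc m) t))"
proof (induction "m - k" arbitrary: k)
  case 0
  then show ?case by (simp add: ivl_br_step ivl_br_same ivl_same)
next
  case (Suc d)
  let ?\<beta> = "ivl (Suc k) m" and ?b = "ivl_br (Suc k) m"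
  let ?\<gamma> = "ivl (Suc m) t" and ?c = "ivl_br (Suc m) t"
  from Suc have "k < m" by simp
  have "ivl_br k t = br [k] (sga_X k) (ivl (Suc k) t) (ivl_br (Suc k) t)"
    using Suc \<open>k < m\<close> by (simp add: ivl_br_step)
  also have "cong_mod rels \<dots> (br [k] (sga_X k) (?\<beta> @ ?\<gamma>) (br ?\<beta> ?b ?\<gamma> ?c))"
    using Suc \<open>k < m\<close> upt_append[of "Suc k" "Suc m" "Suc t"] by (auto intro: cong_mod_br_right)
  also have "cong_mod rels \<dots> (br ([k] @ ?\<beta>) (br [k] (sga_X k) ?\<beta> ?b) ?\<gamma> ?c)"
    using Suc \<open>k < m\<close> by (intro cong_mod_jacobi letter_skew_commute_ivl_br) auto
  also have "br ([k] @ ?\<beta>) (br [k] (sga_X k) ?\<beta> ?b) ?\<gamma> ?c = br (ivl k m) (ivl_br k m) ?\<gamma> ?c"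
    using \<open>k < m\<close> by (simp add: ivl_br_step upt_conv_Cons)
  finally show ?case .
qed

lemma cong_ivl_br_pair:
  "1 \<le> k \<Longrightarrow> k \<le> i \<Longrightarrow> Suc i < n \<Longrightarrow>
    cong_mod rels (ivl_br k (Suc i)) (br (ivl k i) (ivl_br k i) [Suc i] (sga_X (Suc i)))"
  using ivl_br_split[of k i "Suc i"] by (simp add: ivl_same ivl_br_same)

lemma serre_triple_ivl:
  assumes "1 \<le> k" "k \<le> i" "Suc i < t" "t < n"
  shows "serre_triple chi g rels (ivl k i) [Suc i] (ivl (Suc (Suc i)) t)
    (ivl_br k i) (sga_X (Suc i)) (ivl_br (Suc (Suc i)) t) q"
proof (intro serre_triple.intro serre_triple_axioms.intro skew_group_algebra_axioms)
  let ?j = "Suc i"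
  show "q \<noteq> 0" "q \<noteq> - 1" by (fact q_nonzero q_not_minus_one)+
  show "p [?j] [?j] = q" using assms by (intro p_letter_self) auto
  show "p [?j] (ivl (Suc ?j) t) * p (ivl (Suc ?j) t) [?j] = inverse q"
    using pp_letter_ivl_adj[of ?j t] assms unfolding pp_def by auto
  have "cong_mod rels (ivl_br k ?j) (br (ivl k i) (ivl_br k i) [?j] (sga_X ?j))"
    using assms by (intro cong_ivl_br_pair) auto
  moreover have "zero_mod rels (br (ivl k i @ [?j]) (ivl_br k ?j) [?j] (sga_X ?j))"
    using serre_ivl_br_last[of k ?j] assms by (simp add: upt_Suc)
  ultimately show "zero_mod rels (br (ivl k i @ [?j]) (br (ivl k i) (ivl_br k i) [?j] (sga_X ?j)) [?j] (sga_X ?j))"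
    by (blast intro: zero_mod_cong cong_mod_br_left cong_mod_sym)
  show "zero_mod rels (br [?j] (sga_X ?j) ([?j] @ ivl (Suc ?j) t)
      (br [?j] (sga_X ?j) (ivl (Suc ?j) t) (ivl_br (Suc ?j) t)))"
    using serre_letter_ivl_br[of ?j t] assms by (simp add: ivl_br_step upt_conv_Cons)
  show "skew_commute rels (ivl k i) (ivl_br k i) (ivl (Suc ?j) t) (ivl_br (Suc ?j) t)"
    using assms by (intro ivl_br_skew_commute_far) auto
qed

lemma cong_ivl_br_triple:
  assumes "1 \<le> k" "k \<le> i" "Suc i < t" "t < n"
  shows "cong_mod rels (ivl_br k t)
    (br (ivl k i) (ivl_br k i) ([Suc i] @ ivl (Suc (Suc i)) t)
      (br [Suc i] (sga_X (Suc i)) (ivl (Suc (Suc i)) t) (ivl_br (Suc (Suc i)) t)))"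
  using ivl_br_split[of k i t] assms by (simp add: ivl_br_step upt_conv_Cons)

lemma serre_ivl_br_inner:
  assumes "1 \<le> k" "k \<le> i" "Suc i < m" "m < n"
  shows "zero_mod rels (br (ivl k m) (ivl_br k m) [Suc i] (sga_X (Suc i)))"
proof -
  interpret t: serre_triple chi g rels "ivl k i" "[Suc i]" "ivl (Suc (Suc i)) m"
    "ivl_br k i" "sga_X (Suc i)" "ivl_br (Suc (Suc i)) m" q
    using assms by (rule serre_triple_ivl)
  have "ivl k m = ivl k (Suc i) @ ivl (Suc (Suc i)) m"
    using assms by (intro upt_append) auto
  also have "ivl k (Suc i) = ivl k i @ [Suc i]"
    using assms by (simp add: upt_Suc)
  finally have "ivl k m = ivl k i @ [Suc i] @ ivl (Suc (Suc i)) m" by simp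
  then show ?thesis
    using t.serre_abc_b cong_ivl_br_triple[OF assms] by (metis zero_mod_cong cong_mod_br_left)
qed

lemma ivl_br_skew_commute_inner:
  assumes "1 \<le> k" "k < s" "s \<le> t" "t \<le> m" "m < n"
  shows "skew_commute rels (ivl k m) (ivl_br k m) (ivl s t) (ivl_br s t)"
proof (rule skew_commute_ivl_br_right)
  fix j
  assume "s \<le> j" "j \<le> t"
  show "skew_commute rels (ivl k m) (ivl_br k m) [j] (sga_X j)"
    unfolding skew_commute_def
  proof (cases "j = m")
    case True
    with assms \<open>s \<le> j\<close> show "zero_mod rels (br (ivl k m) (ivl_br k m) [j] (sga_X j))"
      using serre_ivl_br_last[of k m] by simp
  next
    case False
    obtain i where "j = Suc i" using assms \<open>s \<le> j\<close> by (cases j) auto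
    with False assms \<open>s \<le> j\<close> \<open>j \<le> t\<close> show "zero_mod rels (br (ivl k m) (ivl_br k m) [j] (sga_X j))"
      using serre_ivl_br_inner[of k i m] by auto
  qed
qed (fact assms)

lemma serre_ivl_br_succ:
  "1 \<le> k \<Longrightarrow> k \<le> m \<Longrightarrow> Suc m < n \<Longrightarrow>
    zero_mod rels (br (ivl k m) (ivl_br k m) (ivl k (Suc m)) (ivl_br k (Suc m)))"
proof (induction m)
  case (Suc i)
  show ?case
  proof (cases "k = Suc i")
    case True
    with Suc.prems serre_rel_left[of k] show ?thesis
      by (simp add: ivl_br_step ivl_br_same ivl_same upt_Suc)
  next
    case False
    with Suc.prems have i: "1 \<le> k" "k \<le> i" "Suc i < Suc (Suc i)" "Suc (Suc i) < n" by auto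
    interpret t: serre_triple chi g rels "ivl k i" "[Suc i]" "[Suc (Suc i)]"
      "ivl_br k i" "sga_X (Suc i)" "sga_X (Suc (Suc i))" q
      using serre_triple_ivl[OF i] by (simp add: ivl_same ivl_br_same)
    have ivl: "ivl k (Suc i) = ivl k i @ [Suc i]" "ivl k (Suc (Suc i)) = ivl k i @ [Suc i] @ [Suc (Suc i)]"
      using i by (simp_all add: upt_Suc)
    have ab: "cong_mod rels (ivl_br k (Suc i)) t.ab" and abc: "cong_mod rels (ivl_br k (Suc (Suc i))) t.abc"
      using cong_ivl_br_pair[of k i] cong_ivl_br_triple[OF i] i by (simp_all add: ivl_same ivl_br_same)
    have "zero_mod rels (br (ivl k i) (ivl_br k i) (ivl k i @ [Suc i]) (ivl_br k (Suc i)))"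
      using Suc.IH i ivl(1) by simp
    then have "zero_mod rels (br (ivl k i) (ivl_br k i) (ivl k i @ [Suc i]) t.ab)"
      by (rule zero_mod_cong[OF cong_mod_br_right[OF cong_mod_sym[OF ab]]])
    then have "zero_mod rels (br (ivl k i @ [Suc i]) t.ab (ivl k i @ [Suc i] @ [Suc (Suc i)]) t.abc)"
      using i by (intro t.serre_ab_abc p_ivl_self) (auto simp: pp_ivl_letter_adj[of k i, unfolded pp_def])
    moreover have "cong_mod rels (br (ivl k i @ [Suc i]) (ivl_br k (Suc i)) (ivl k i @ [Suc i] @ [Suc (Suc i)])
        (ivl_br k (Suc (Suc i)))) (br (ivl k i @ [Suc i]) t.ab (ivl k i @ [Suc i] @ [Suc (Suc i)]) t.abc)"
      using cong_mod_br_left[OF ab] cong_mod_br_right[OF abc] by (rule cong_mod_trans)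
    ultimately show ?thesis unfolding ivl by (rule zero_mod_cong[rotated])
  qed
qed simp

lemma serre_ivl_br_longer:
  assumes "1 \<le> k" "k \<le> m" "m < t" "t < n"
  shows "zero_mod rels (br (ivl k m) (ivl_br k m) (ivl k t) (ivl_br k t))"
proof (cases "t = Suc m")
  case False
  let ?A = "ivl_br k m" and ?B = "ivl_br k (Suc m)"
  let ?\<gamma> = "ivl (Suc (Suc m)) t" and ?c = "ivl_br (Suc (Suc m)) t"
  have "ivl k t = ivl k (Suc m) @ ?\<gamma>" using assms False by (intro upt_append) auto
  moreover have "cong_mod rels (ivl_br k t) (br (ivl k (Suc m)) ?B ?\<gamma> ?c)"
    using assms False by (intro ivl_br_split) auto
  ultimately have "cong_mod rels (br (ivl k m) ?A (ivl k t) (ivl_br k t))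
      (br (ivl k m) ?A (ivl k (Suc m) @ ?\<gamma>) (br (ivl k (Suc m)) ?B ?\<gamma> ?c))"
    by (simp add: cong_mod_br_right)
  also have "cong_mod rels \<dots> (br (ivl k m @ ivl k (Suc m)) (br (ivl k m) ?A (ivl k (Suc m)) ?B) ?\<gamma> ?c)"
    using assms False by (intro cong_mod_jacobi ivl_br_skew_commute_far) auto
  finally show ?thesis
    using serre_ivl_br_succ[of k m] assms by (auto intro: zero_mod_cong zero_mod_br_left)
qed (use assms serre_ivl_br_succ in simp)

lemma zero_mod_br_ivl_ivl:
  assumes "1 \<le> k" "k \<le> m" "m < n" "s \<le> t" "t < n" "s \<noteq> Suc m"
    and "standard (ivl k m @ ivl s t)" "std_split (ivl k m @ ivl s t) = length (ivl k m)"
  shows "zero_mod rels (br (ivl k m) (ivl_br k m) (ivl s t) (ivl_br s t))"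
proof -
  consider "s = k" "m < t" | "k < s" "t \<le> m" | "Suc m < s"
    using std_split_ivl_append_ivl_cases[OF assms(7) assms(2,4,8)] assms(6) by linarith
  then show ?thesis
  proof cases
    case 1
    with assms show ?thesis using serre_ivl_br_longer[of k m t] by simp
  next
    case 2
    with assms show ?thesis using ivl_br_skew_commute_inner[of k s t m] by (simp add: skew_commute_def)
  next
    case 3
    with assms show ?thesis using ivl_br_skew_commute_far[of k m s t] by (simp add: skew_commute_def)
  qed
qed

theorem ivl_or_zero_mod_std_bracket:
  "set u \<subseteq> {1..<n} \<Longrightarrow> standard u \<Longrightarrow>
    (\<exists>k m. 1 \<le> k \<and> k \<le> m \<and> m < n \<and> u = ivl k m) \<or> zero_mod rels (std_bracket chi g u)"
proof (induction "length u" arbitrary: u rule: less_induct)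
  case less
  show ?case
  proof (cases "length u = 1")
    case True
    then obtain i where "u = [i]" by (auto simp: length_Suc_conv)
    with less.prems show ?thesis by (intro disjI1 exI[of _ i]) (auto simp: ivl_same)
  next
    case False
    moreover have "0 < length u" using less.prems(2) by (simp add: standard_def)
    ultimately have len: "2 \<le> length u" by linarith
    obtain v w where u: "u = v @ w" "v \<noteq> []" "w \<noteq> []" and "standard v" "standard w"
      and split: "std_split u = length v"
      and br: "std_bracket chi g u = br v (std_bracket chi g v) w (std_bracket chi g w)"
      using std_bracket_std_factors[OF less.prems(2) len] .
    moreover have "set v \<subseteq> {1..<n}" "set w \<subseteq> {1..<n}" using less.prems(1) u by auto
    ultimately consider "zero_mod rels (std_bracket chi g v) \<or> zero_mod rels (std_bracket chi g w)"
      | k m s t where "1 \<le> k" "k \<le> m" "m < n" "v = ivl k m" "1 \<le> s" "s \<le> t" "t < n" "w = ivl s t"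
      using less.hyps[of v] less.hyps[of w] by auto
    then show ?thesis
    proof cases
      case 1
      then show ?thesis unfolding br by (blast intro: zero_mod_br_left zero_mod_br_right)
    next
      case (2 k m s t)
      show ?thesis
      proof (cases "s = Suc m")
        case True
        with 2 u(1) have "u = ivl k t" using upt_append[of k "Suc m" "Suc t"] by simp
        with 2 True show ?thesis by (intro disjI1 exI[of _ k] exI[of _ t]) simp
      next
        case False
        with 2 less.prems(2) u(1) split show ?thesis
          unfolding br by (simp add: std_bracket_ivl zero_mod_br_ivl_ivl)
      qed
    qed
  qed
qed

end

theorem lemma3p1:
  fixes n :: nat and q :: "'k::field"
    and g :: "nat \<Rightarrow> 'g::ab_group_add" and chi :: "nat \<Rightarrow> 'g \<Rightarrow> 'k"
    and u :: "nat list"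
  assumes n2: "n \<ge> 2"
    and q0: "q \<noteq> 0" and q3: "q ^ 3 \<noteq> 1" and qm1: "q \<noteq> -1"
    and chi_hom: "\<And>i a b. chi i (a + b) = chi i a * chi i b"
    and chi_nz: "\<And>i a. chi i a \<noteq> 0"
    and p_ii: "\<And>i. 1 \<le> i \<Longrightarrow> i < n \<Longrightarrow> chi i (g i) = q"
    and p_nn: "chi n (g n) = q ^ 2"
    and p_adj: "\<And>i. 1 < i \<Longrightarrow> i < n \<Longrightarrow> chi i (g (i - 1)) * chi (i - 1) (g i) = inverse q"
    and p_last: "chi (n - 1) (g n) * chi n (g (n - 1)) = inverse (q ^ 2)"
    and p_far: "\<And>i j. 1 \<le> i \<Longrightarrow> i + 1 < j \<Longrightarrow> j \<le> n \<Longrightarrow> chi i (g j) * chi j (g i) = 1"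
    and u_letters: "set u \<subseteq> {1..<n}"
    and u_std: "standard u"
  shows "(\<exists>k m. 1 \<le> k \<and> k \<le> m \<and> m < n \<and> u = [k..<m+1])
         \<or> zero_in_U n chi g (std_bracket chi g u)"
proof -
  interpret uq_sp chi g n q
    by unfold_locales (use assms in auto)
  show ?thesis
    using ivl_or_zero_mod_std_bracket[OF u_letters u_std] unfolding zero_in_U_def by simp
qed

end
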